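(* (i) Let $G$ be a graph, $c$ a Grundy-coloring of $G$ using $k$ colors, and $u$ a vertex with $c(u)=k$. Let $H$ be a subgraph of $G$ of minimum cardinality such that $u\in V(H)$ and the restriction of $c$ to $V(H)$ is a Grundy-coloring of $H$ with $k$ colors. Then $V(H)\subseteq B(u,k-1)\subseteq B(u,d_G(u))$. Moreover, either $V(H)\subseteq B(u,\Delta(u))$ (and hence $V(H)\subseteq V(G(u))$), or for some neighbor $w$ of $u$, $V(H)\subseteq B(w,\Delta(w))$ (and hence $V(H)\subseteq V(G(w))$). (ii) For any graph $G$, $\Gamma(G)=\max_{v\in V(G)}\Gamma(G(v))=\max_{v\in V(G)}\Gamma_{G(v)}(v)$.
   Context: Graphs are finite and simple. A Grundy-coloring of $G$ is a proper coloring with nonempty color classes $C_1,\ldots,C_k$ (color $i$ on $C_i$) such that for $i<j$ each vertex of $C_j$ has a neighbor in $C_i$; $\Gamma(G)$ is the maximum number of colors of a Grundy-coloring, and $\Gamma_G(v)$ is the maximum color of $v$ over Grundy-colorings of $G$. $d_G(v)$ is the degree and $d_G(u,v)$ the distance. $B(u,r)=\{v\in V(G): d_G(u,v)\le r\}$. For $u\in V(G)$, $\Delta(u)=\max\{d(v): v\in N(u),\ d(v)\le d(u)\}$, and $G(u)$ is the induced subgraph $G[B(u,\Delta(u))]$. *)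

theory Defs
  imports Main
begin

definition graph :: "'a set \<Rightarrow> ('a \<Rightarrow> 'a \<Rightarrow> bool) \<Rightarrow> bool" where
  "graph V E \<longleftrightarrow> finite V \<and>
     (\<forall>x y. E x y \<longrightarrow> x \<in> V \<and> y \<in> V \<and> x \<noteq> y \<and> E y x)"

definition subgraph :: "'a set \<Rightarrow> ('a \<Rightarrow> 'a \<Rightarrow> bool) \<Rightarrow> 'a set \<Rightarrow> ('a \<Rightarrow> 'a \<Rightarrow> bool) \<Rightarrow> bool" where
  "subgraph VH EH V E \<longleftrightarrow> graph VH EH \<and> VH \<subseteq> V \<and> (\<forall>x y. EH x y \<longrightarrow> E x y)"

definition induced :: "('a \<Rightarrow> 'a \<Rightarrow> bool) \<Rightarrow> 'a set \<Rightarrow> 'a \<Rightarrow> 'a \<Rightarrow> bool" where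
  "induced E S = (\<lambda>x y. E x y \<and> x \<in> S \<and> y \<in> S)"

definition deg :: "'a set \<Rightarrow> ('a \<Rightarrow> 'a \<Rightarrow> bool) \<Rightarrow> 'a \<Rightarrow> nat" where
  "deg V E v = card {w \<in> V. E v w}"

inductive walk :: "'a set \<Rightarrow> ('a \<Rightarrow> 'a \<Rightarrow> bool) \<Rightarrow> nat \<Rightarrow> 'a \<Rightarrow> 'a \<Rightarrow> bool"
  for V E where
  walk0: "u \<in> V \<Longrightarrow> walk V E 0 u u"
| walkS: "E u v \<Longrightarrow> walk V E n v w \<Longrightarrow> walk V E (Suc n) u w"

definition ball :: "'a set \<Rightarrow> ('a \<Rightarrow> 'a \<Rightarrow> bool) \<Rightarrow> 'a \<Rightarrow> nat \<Rightarrow> 'a set" where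
  "ball V E u r = {v \<in> V. \<exists>n\<le>r. walk V E n u v}"

definition Delta :: "'a set \<Rightarrow> ('a \<Rightarrow> 'a \<Rightarrow> bool) \<Rightarrow> 'a \<Rightarrow> nat" where
  "Delta V E u = Max (insert 0 {deg V E v | v. v \<in> V \<and> E u v \<and> deg V E v \<le> deg V E u})"

definition locV :: "'a set \<Rightarrow> ('a \<Rightarrow> 'a \<Rightarrow> bool) \<Rightarrow> 'a \<Rightarrow> 'a set" where
  "locV V E u = ball V E u (Delta V E u)"

definition locE :: "'a set \<Rightarrow> ('a \<Rightarrow> 'a \<Rightarrow> bool) \<Rightarrow> 'a \<Rightarrow> 'a \<Rightarrow> 'a \<Rightarrow> bool" where
  "locE V E u = induced E (locV V E u)"

definition grundy_coloring :: "'a set \<Rightarrow> ('a \<Rightarrow> 'a \<Rightarrow> bool) \<Rightarrow> ('a \<Rightarrow> nat) \<Rightarrow> nat \<Rightarrow> bool" where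
  "grundy_coloring V E c k \<longleftrightarrow>
     c ` V = {1..k} \<and>
     (\<forall>x\<in>V. \<forall>y\<in>V. E x y \<longrightarrow> c x \<noteq> c y) \<and>
     (\<forall>x\<in>V. \<forall>i. 1 \<le> i \<and> i < c x \<longrightarrow> (\<exists>y\<in>V. E x y \<and> c y = i))"

definition grundy_number :: "'a set \<Rightarrow> ('a \<Rightarrow> 'a \<Rightarrow> bool) \<Rightarrow> nat" where
  "grundy_number V E = Max {k. \<exists>c. grundy_coloring V E c k}"

definition grundy_vertex :: "'a set \<Rightarrow> ('a \<Rightarrow> 'a \<Rightarrow> bool) \<Rightarrow> 'a \<Rightarrow> nat" where
  "grundy_vertex V E v = Max {c v | c k. grundy_coloring V E c k}"

end

theory Submission
  imports Defs
begin

(* The key object is the set D(x) of vertices reachable from x along paths of strictly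
  decreasing colour. A vertex y of D(x) lies at distance at most c(x) - c(y) <= c(x) - 1
  from x, and c restricted to D(x) is again a Grundy colouring. Minimality of H therefore
  forces V(H) = D_H(u), so V(H) lies in B(u, k - 1), and k - 1 <= d(u) because u sees all
  smaller colours. If k - 1 > Delta(u), a neighbour v of u of colour k - 1 has degree at
  least k - 1 > Delta(u), hence d(v) > d(u) and Delta(v) >= d(u) >= k - 1; walking through
  the edge vu then keeps V(H) inside B(v, Delta(v)).

  For (ii), first fit extends a Grundy colouring of an induced subgraph to the whole graph
  without changing it, so Gamma(G(v)) <= Gamma(G). Conversely, if u has the maximum colour k,
  either D(u) already lies in G(u), or exchanging the colours of u and of v as above gives a
  colouring whose decreasing set from v is a Grundy colouring inside G(v) with v coloured k. *)

definition grundy_on :: "'a set \<Rightarrow> ('a \<Rightarrow> 'a \<Rightarrow> bool) \<Rightarrow> ('a \<Rightarrow> nat) \<Rightarrow> bool" where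
  "grundy_on S E c \<longleftrightarrow> (\<forall>x\<in>S. 1 \<le> c x) \<and> (\<forall>x\<in>S. \<forall>y\<in>S. E x y \<longrightarrow> c x \<noteq> c y) \<and>
     (\<forall>x\<in>S. \<forall>i. 1 \<le> i \<and> i < c x \<longrightarrow> (\<exists>y\<in>S. E x y \<and> c y = i))"

lemma graph_sym: "graph V E \<Longrightarrow> E x y \<Longrightarrow> E y x"
  by (simp add: graph_def)

lemma graph_induced: "graph V E \<Longrightarrow> S \<subseteq> V \<Longrightarrow> graph S (induced E S)"
  unfolding graph_def induced_def by (auto intro: finite_subset)

lemma grundy_coloring_induced_iff:
  "S \<subseteq> T \<Longrightarrow> grundy_coloring S (induced E T) c k \<longleftrightarrow> grundy_coloring S E c k"
  unfolding grundy_coloring_def induced_def by blast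

lemma grundy_on_induced_iff: "S \<subseteq> T \<Longrightarrow> grundy_on S (induced E T) c \<longleftrightarrow> grundy_on S E c"
  unfolding grundy_on_def induced_def by blast

lemma grundy_coloring_range: "grundy_coloring S E c k \<Longrightarrow> x \<in> S \<Longrightarrow> c x \<in> {1..k}"
  unfolding grundy_coloring_def by blast

lemma grundy_coloring_imp_grundy_on: "grundy_coloring S E c k \<Longrightarrow> grundy_on S E c"
  using grundy_coloring_range unfolding grundy_on_def grundy_coloring_def by fastforce

lemma grundy_coloring_if_grundy_on_max:
  assumes c: "grundy_on S E c" and "x \<in> S" and max: "\<forall>y\<in>S. c y \<le> c x"
  shows "grundy_coloring S E c (c x)"
proof -
  have "{1..c x} \<subseteq> c ` S"
  proof
    fix i assume "i \<in> {1..c x}"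
    then consider "i = c x" | "1 \<le> i \<and> i < c x" by fastforce
    then show "i \<in> c ` S"
    proof cases
      case 2
      then obtain y where "y \<in> S" "c y = i" using c \<open>x \<in> S\<close> unfolding grundy_on_def by blast
      then show ?thesis by blast
    qed (use \<open>x \<in> S\<close> in blast)
  qed
  moreover have "c ` S \<subseteq> {1..c x}" using c max by (auto simp: grundy_on_def)
  ultimately show ?thesis using c unfolding grundy_on_def grundy_coloring_def by blast
qed

lemma grundy_on_imp_grundy_coloring:
  assumes "finite S" "grundy_on S E c"
  obtains k where "grundy_coloring S E c k"
proof (cases "S = {}")
  case True
  then have "grundy_coloring S E c 0" by (simp add: grundy_coloring_def)
  then show ?thesis by (rule that)
next
  case False
  then have "Max (c ` S) \<in> c ` S" using assms(1) by simp
  then obtain x where "x \<in> S" "c x = Max (c ` S)" by auto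
  moreover have "\<forall>y\<in>S. c y \<le> Max (c ` S)" using assms(1) by simp
  ultimately show ?thesis
    using that grundy_coloring_if_grundy_on_max[OF assms(2)] by metis
qed

lemma grundy_on_insert:
  assumes G: "graph V E" and "S \<subseteq> V" "x \<notin> S" and c: "grundy_on S E c"
  obtains c' where "grundy_on (insert x S) E c'" "\<forall>y\<in>S. c' y = c y"
proof -
  define N where "N = c ` {y \<in> S. E x y}"
  have "finite N" unfolding N_def using G \<open>S \<subseteq> V\<close> by (auto simp: graph_def intro: finite_subset)
  then obtain a :: nat where "a \<notin> insert 0 N" using ex_new_if_finite by blast
  then have ex: "\<exists>m. 1 \<le> m \<and> m \<notin> N" by (intro exI[of _ a]) auto
  define m where "m = (LEAST m. 1 \<le> m \<and> m \<notin> N)"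
  have m: "1 \<le> m" "m \<notin> N" using LeastI_ex[OF ex] unfolding m_def by auto
  have below_m: "i \<in> N" if "1 \<le> i" "i < m" for i
    using not_less_Least[of i "\<lambda>m. 1 \<le> m \<and> m \<notin> N"] that unfolding m_def by blast
  define c' where "c' = c(x := m)"
  have "grundy_on (insert x S) E c'"
    unfolding grundy_on_def
  proof (intro conjI ballI allI impI)
    fix y assume "y \<in> insert x S"
    then show "1 \<le> c' y" using c m(1) by (auto simp: c'_def grundy_on_def)
  next
    fix y z assume "y \<in> insert x S" "z \<in> insert x S" "E y z"
    moreover have "y \<noteq> z" "E z y" using G \<open>E y z\<close> by (auto simp: graph_def)
    ultimately show "c' y \<noteq> c' z"
      using c m(2) \<open>x \<notin> S\<close> by (auto simp: c'_def N_def grundy_on_def)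
  next
    fix y i assume y: "y \<in> insert x S" and i: "1 \<le> i \<and> i < c' y"
    obtain z where "z \<in> S" "E y z" "c z = i"
    proof (cases "y = x")
      case True
      then show ?thesis using that below_m i by (auto simp: c'_def N_def)
    next
      case False
      then have "y \<in> S" "1 \<le> i \<and> i < c y" using y i by (auto simp: c'_def)
      then show ?thesis using that c unfolding grundy_on_def by blast
    qed
    then show "\<exists>z\<in>insert x S. E y z \<and> c' z = i"
      using \<open>x \<notin> S\<close> by (auto simp: c'_def)
  qed
  moreover have "\<forall>y\<in>S. c' y = c y" using \<open>x \<notin> S\<close> by (auto simp: c'_def)
  ultimately show ?thesis by (rule that)
qed

lemma grundy_on_extend:
  assumes G: "graph V E" and "S \<subseteq> V" "grundy_on S E c"
  obtains c' where "grundy_on V E c'" "\<forall>x\<in>S. c' x = c x"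
proof -
  have "finite V" using G by (simp add: graph_def)
  have "\<exists>c'. grundy_on (S \<union> T) E c' \<and> (\<forall>x\<in>S. c' x = c x)" if "T \<subseteq> V" for T
    using finite_subset[OF that \<open>finite V\<close>] that
  proof (induction rule: finite_subset_induct')
    case empty
    then show ?case using assms(3) by auto
  next
    case (insert a T)
    then obtain c1 where c1: "grundy_on (S \<union> T) E c1" "\<forall>x\<in>S. c1 x = c x" by blast
    show ?case
    proof (cases "a \<in> S \<union> T")
      case True
      then show ?thesis using c1 by (auto simp: insert_absorb)
    next
      case False
      have "S \<union> T \<subseteq> V" using \<open>S \<subseteq> V\<close> \<open>T \<subseteq> V\<close> by blast
      with grundy_on_insert[OF G _ False c1(1)]
      obtain c2 where "grundy_on (insert a (S \<union> T)) E c2" "\<forall>y\<in>S \<union> T. c2 y = c1 y"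
        by blast
      then show ?thesis using c1(2) by auto
    qed
  qed
  then show ?thesis using that \<open>S \<subseteq> V\<close> by (metis order_refl sup.absorb2)
qed

lemma grundy_coloring_exists: "graph V E \<Longrightarrow> \<exists>c k. grundy_coloring V E c k"
  by (metis empty_subsetI empty_iff grundy_on_def grundy_on_extend
      grundy_on_imp_grundy_coloring graph_def)

lemma grundy_coloring_le_card: "finite S \<Longrightarrow> grundy_coloring S E c k \<Longrightarrow> k \<le> card S"
  unfolding grundy_coloring_def by (metis card_atLeastAtMost card_image_le diff_Suc_1)

lemma finite_grundy_coloring_sizes: "finite S \<Longrightarrow> finite {k. \<exists>c. grundy_coloring S E c k}"
  by (rule finite_subset[of _ "{..card S}"]) (auto dest: grundy_coloring_le_card)

lemma le_grundy_number: "finite S \<Longrightarrow> grundy_coloring S E c k \<Longrightarrow> k \<le> grundy_number S E"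
  unfolding grundy_number_def by (rule Max_ge[OF finite_grundy_coloring_sizes]) auto

lemma grundy_number_attained: "graph V E \<Longrightarrow> \<exists>c. grundy_coloring V E c (grundy_number V E)"
proof -
  assume G: "graph V E"
  have "finite V" using G by (simp add: graph_def)
  moreover have "{k. \<exists>c. grundy_coloring V E c k} \<noteq> {}" using grundy_coloring_exists[OF G] by auto
  ultimately show ?thesis
    using Max_in[OF finite_grundy_coloring_sizes] unfolding grundy_number_def by fastforce
qed

lemma finite_grundy_vertex_colors:
  "finite S \<Longrightarrow> v \<in> S \<Longrightarrow> finite {c v | c k. grundy_coloring S E c k}"
  by (rule finite_subset[of _ "{..card S}"])
    (force dest: grundy_coloring_le_card grundy_coloring_range, simp)

lemma le_grundy_vertex:
  "finite S \<Longrightarrow> v \<in> S \<Longrightarrow> grundy_coloring S E c k \<Longrightarrow> c v \<le> grundy_vertex S E v"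
  unfolding grundy_vertex_def by (rule Max_ge[OF finite_grundy_vertex_colors]) auto

lemma grundy_vertex_le_grundy_number:
  assumes G: "graph V E" and "v \<in> V"
  shows "grundy_vertex V E v \<le> grundy_number V E"
  unfolding grundy_vertex_def
proof (rule Max.boundedI)
  show "finite {c v | c k. grundy_coloring V E c k}"
    using G \<open>v \<in> V\<close> by (intro finite_grundy_vertex_colors) (simp_all add: graph_def)
  show "{c v | c k. grundy_coloring V E c k} \<noteq> {}" using grundy_coloring_exists[OF G] by auto
  fix a assume "a \<in> {c v | c k. grundy_coloring V E c k}"
  then obtain c k where "grundy_coloring V E c k" "a = c v" by blast
  then show "a \<le> grundy_number V E"
    using G \<open>v \<in> V\<close> grundy_coloring_range le_grundy_number
    by (fastforce simp: graph_def)
qed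

lemma grundy_on_le_grundy_number:
  "finite V \<Longrightarrow> grundy_on V E c \<Longrightarrow> x \<in> V \<Longrightarrow> c x \<le> grundy_number V E"
  by (metis atLeastAtMost_iff grundy_coloring_range grundy_on_imp_grundy_coloring
      le_grundy_number le_trans)

lemma grundy_on_le_grundy_vertex:
  "finite V \<Longrightarrow> grundy_on V E c \<Longrightarrow> x \<in> V \<Longrightarrow> c x \<le> grundy_vertex V E x"
  by (metis grundy_on_imp_grundy_coloring le_grundy_vertex)

lemma grundy_number_induced_le:
  assumes G: "graph V E" and "S \<subseteq> V"
  shows "grundy_number S (induced E S) \<le> grundy_number V E"
proof -
  obtain c where c: "grundy_coloring S (induced E S) c (grundy_number S (induced E S))"
    using grundy_number_attained[OF graph_induced[OF G \<open>S \<subseteq> V\<close>]] by blast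
  show ?thesis
  proof (cases "grundy_number S (induced E S) = 0")
    case False
    then obtain y where "y \<in> S" "c y = grundy_number S (induced E S)"
      using c unfolding grundy_coloring_def
      by (metis atLeastAtMost_iff imageE le_refl less_one not_le)
    moreover obtain c' where "grundy_on V E c'" "\<forall>x\<in>S. c' x = c x"
      using grundy_on_extend[OF G \<open>S \<subseteq> V\<close>] c
      by (metis grundy_coloring_imp_grundy_on grundy_coloring_induced_iff order_refl)
    ultimately show ?thesis
      using grundy_on_le_grundy_number G \<open>S \<subseteq> V\<close> by (metis graph_def subsetD)
  qed simp
qed

lemma walk_last_in_vertices: "walk V E n x y \<Longrightarrow> y \<in> V"
  by (induction rule: walk.induct) auto

lemma walk_snoc: "walk V E n x y \<Longrightarrow> E y z \<Longrightarrow> z \<in> V \<Longrightarrow> walk V E (Suc n) x z"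
  by (induction rule: walk.induct) (auto intro: walk.intros)

lemma walk_mono:
  "walk V E n x y \<Longrightarrow> V \<subseteq> V' \<Longrightarrow> (\<forall>a b. E a b \<longrightarrow> E' a b) \<Longrightarrow> walk V' E' n x y"
proof (induction rule: walk.induct)
  case (walk0 u)
  then show ?case by (auto intro: walk.walk0)
next
  case (walkS u v n w)
  then show ?case by (meson walk.walkS)
qed

lemma walk_imp_mem_ball: "walk V E n x y \<Longrightarrow> n \<le> r \<Longrightarrow> y \<in> ball V E x r"
  unfolding ball_def using walk_last_in_vertices by auto

lemma ball_mono: "r \<le> s \<Longrightarrow> ball V E x r \<subseteq> ball V E x s"
  unfolding ball_def by (auto intro: le_trans)

lemma ball_subgraph: "subgraph VH EH V E \<Longrightarrow> ball VH EH x r \<subseteq> ball V E x r"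
  unfolding ball_def subgraph_def using walk_mono[of VH EH _ x _ V E] by auto

lemma locV_subset: "locV V E v \<subseteq> V"
  unfolding locV_def ball_def by auto

lemma mem_locV: "v \<in> V \<Longrightarrow> v \<in> locV V E v"
  unfolding locV_def by (rule walk_imp_mem_ball[OF walk.walk0]) simp_all

lemma graph_loc: "graph V E \<Longrightarrow> graph (locV V E v) (locE V E v)"
  unfolding locE_def by (rule graph_induced[OF _ locV_subset])

inductive_set descendants :: "'a set \<Rightarrow> ('a \<Rightarrow> 'a \<Rightarrow> bool) \<Rightarrow> ('a \<Rightarrow> nat) \<Rightarrow> 'a \<Rightarrow> 'a set"
  for V E c x where
  self: "x \<in> descendants V E c x"
| step: "y \<in> descendants V E c x \<Longrightarrow> z \<in> V \<Longrightarrow> E y z \<Longrightarrow> c z < c y \<Longrightarrow>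
    z \<in> descendants V E c x"

lemma descendants_subset: "x \<in> V \<Longrightarrow> descendants V E c x \<subseteq> V"
proof
  show "y \<in> V" if "y \<in> descendants V E c x" "x \<in> V" for y
    using that by (induction rule: descendants.induct) auto
qed

lemma descendants_walk:
  assumes "y \<in> descendants V E c x" "x \<in> V"
  shows "\<exists>n. walk V E n x y \<and> n + c y \<le> c x"
  using assms
proof (induction rule: descendants.induct)
  case self
  then show ?case by (auto intro: walk.walk0)
next
  case (step y z)
  then obtain n where "walk V E n x y" "n + c y \<le> c x" by blast
  then have "walk V E (Suc n) x z" "Suc n + c z \<le> c x" using step.hyps walk_snoc by auto
  then show ?case by blast
qed

lemma descendants_first_step:
  "y \<in> descendants V E c x \<Longrightarrow>
    y = x \<or> (\<exists>z\<in>V. E x z \<and> c z < c x \<and> y \<in> descendants V E c z)"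
proof (induction rule: descendants.induct)
  case (step y z)
  then show ?case by (auto intro: descendants.intros)
qed simp

lemma grundy_on_descendantsI:
  assumes "x \<in> V"
    and pos: "\<And>y. y \<in> descendants V E c x \<Longrightarrow> 1 \<le> c y"
    and proper: "\<And>y z. y \<in> descendants V E c x \<Longrightarrow> z \<in> descendants V E c x \<Longrightarrow> E y z \<Longrightarrow>
      c y \<noteq> c z"
    and grundy: "\<And>y i. y \<in> descendants V E c x \<Longrightarrow> 1 \<le> i \<Longrightarrow> i < c y \<Longrightarrow>
      \<exists>z\<in>V. E y z \<and> c z = i"
  shows "grundy_on (descendants V E c x) E c"
  unfolding grundy_on_def
proof (intro conjI ballI allI impI)
  fix y i assume y: "y \<in> descendants V E c x" and i: "1 \<le> i \<and> i < c y"
  then obtain z where z: "z \<in> V" "E y z" "c z = i" using grundy by blast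
  then have "z \<in> descendants V E c x" using descendants.step[OF y z(1,2)] i by simp
  then show "\<exists>z\<in>descendants V E c x. E y z \<and> c z = i" using z by blast
next
  fix y assume "y \<in> descendants V E c x"
  then show "1 \<le> c y" by (rule pos)
next
  fix y z assume "y \<in> descendants V E c x" "z \<in> descendants V E c x" "E y z"
  then show "c y \<noteq> c z" by (rule proper)
qed

lemma grundy_on_descendants:
  assumes c: "grundy_on V E c" and "x \<in> V"
  shows "grundy_on (descendants V E c x) E c"
proof (rule grundy_on_descendantsI[OF \<open>x \<in> V\<close>])
  have sub: "descendants V E c x \<subseteq> V" using descendants_subset \<open>x \<in> V\<close> .
  note c' = c[unfolded grundy_on_def]
  show "1 \<le> c y" if "y \<in> descendants V E c x" for y
    using c' sub that by blast
  show "c y \<noteq> c z" if "y \<in> descendants V E c x" "z \<in> descendants V E c x" "E y z" for y z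
    using c' sub that by blast
  show "\<exists>z\<in>V. E y z \<and> c z = i" if "y \<in> descendants V E c x" "1 \<le> i" "i < c y" for y i
    using c' sub that by blast
qed

lemma descendants_subset_ball:
  assumes "x \<in> V" "\<forall>y\<in>descendants V E c x. 1 \<le> c y"
  shows "descendants V E c x \<subseteq> ball V E x (c x - 1)"
proof
  fix y assume y: "y \<in> descendants V E c x"
  obtain n where walk: "walk V E n x y" and "n + c y \<le> c x"
    using descendants_walk[OF y assms(1)] by blast
  moreover have "1 \<le> c y" using assms(2) y by blast
  ultimately have "n \<le> c x - 1" by linarith
  then show "y \<in> ball V E x (c x - 1)" by (rule walk_imp_mem_ball[OF walk])
qed

lemma card_le_deg:
  assumes "finite V" "A \<subseteq> c ` {w \<in> V. E x w}"
  shows "card A \<le> deg V E x"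
proof -
  have "finite {w \<in> V. E x w}" using assms(1) by simp
  then have "card A \<le> card (c ` {w \<in> V. E x w})" using assms(2) by (simp add: card_mono)
  also have "\<dots> \<le> card {w \<in> V. E x w}" using \<open>finite {w \<in> V. E x w}\<close> by (rule card_image_le)
  finally show ?thesis unfolding deg_def .
qed

lemma lower_colors_subset_neighbour_colors:
  assumes "grundy_on V E c" "x \<in> V"
  shows "{1..<c x} \<subseteq> c ` {w \<in> V. E x w}"
proof
  fix i assume "i \<in> {1..<c x}"
  then have "1 \<le> i \<and> i < c x" by simp
  then obtain w where "w \<in> V" "E x w" "c w = i" using assms unfolding grundy_on_def by blast
  then show "i \<in> c ` {w \<in> V. E x w}" by blast
qed

lemma pred_color_le_deg:
  assumes "finite V" "grundy_on V E c" "x \<in> V"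
  shows "c x - 1 \<le> deg V E x"
  using card_le_deg[where c = c and E = E and x = x,
      OF assms(1) lower_colors_subset_neighbour_colors[OF assms(2,3)]] by simp

lemma color_le_deg_if_higher_neighbour:
  assumes "finite V" "grundy_on V E c" "x \<in> V" "y \<in> V" "E x y" "c x < c y"
  shows "c x \<le> deg V E x"
proof -
  have "insert (c y) {1..<c x} \<subseteq> c ` {w \<in> V. E x w}"
    using lower_colors_subset_neighbour_colors[OF assms(2,3)] assms(4,5) by blast
  from card_le_deg[where c = c and E = E and x = x, OF assms(1) this]
  show ?thesis using assms(6) by simp
qed

lemma inj_on_neighbour_colors:
  assumes "finite V" "grundy_on V E c" "x \<in> V" "deg V E x \<le> c x - 1"
  shows "inj_on c {w \<in> V. E x w}"
proof (rule eq_card_imp_inj_on)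
  let ?N = "{w \<in> V. E x w}"
  show "finite ?N" using assms(1) by simp
  have "c x - 1 \<le> card (c ` ?N)"
    using card_mono[OF _ lower_colors_subset_neighbour_colors[OF assms(2,3)]] \<open>finite ?N\<close> by simp
  moreover have "card (c ` ?N) \<le> card ?N" using card_image_le \<open>finite ?N\<close> .
  ultimately show "card (c ` ?N) = card ?N" using assms(4) unfolding deg_def by linarith
qed

lemma Delta_ge_deg:
  assumes "finite V" "v \<in> V" "E u v" "deg V E v \<le> deg V E u"
  shows "deg V E v \<le> Delta V E u"
proof -
  have "{deg V E v | v. v \<in> V \<and> E u v \<and> deg V E v \<le> deg V E u} \<subseteq> deg V E ` V" by auto
  then have "finite (insert 0 {deg V E v | v. v \<in> V \<and> E u v \<and> deg V E v \<le> deg V E u})"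
    using assms(1) finite_subset by auto
  then show ?thesis unfolding Delta_def by (rule Max_ge) (use assms in auto)
qed

lemma deg_le_Delta_of_next_color:
  assumes G: "graph V E" and c: "grundy_on V E c" and "E u v" "c v + 1 = c u"
    and "Delta V E u < c u - 1"
  shows "deg V E u \<le> Delta V E v"
proof -
  have "finite V" "u \<in> V" "v \<in> V" "E v u" using G \<open>E u v\<close> by (auto simp: graph_def)
  have "c v \<le> deg V E v"
    using color_le_deg_if_higher_neighbour[OF \<open>finite V\<close> c \<open>v \<in> V\<close> \<open>u \<in> V\<close> \<open>E v u\<close>] assms(4)
    by simp
  with Delta_ge_deg[where E = E, OF \<open>finite V\<close> \<open>v \<in> V\<close> \<open>E u v\<close>] assms(4,5)
  have "deg V E u < deg V E v" by fastforce
  then show ?thesis using Delta_ge_deg[where E = E, OF \<open>finite V\<close> \<open>u \<in> V\<close> \<open>E v u\<close>] by simp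
qed

lemma descendants_subset_ball_neighbour:
  assumes "x \<in> V" "v \<in> V" "E v x" and pos: "\<forall>y\<in>V. 1 \<le> c y" and "c v + 1 = c x"
    and "c x - 1 \<le> r" and unique: "c x \<le> r \<or> (\<forall>z. E x z \<and> c z = c v \<longrightarrow> z = v)"
  shows "descendants V E c x \<subseteq> ball V E v r"
proof
  fix y assume y: "y \<in> descendants V E c x"
  have "1 \<le> c y" using pos descendants_subset[OF \<open>x \<in> V\<close>] y by blast
  have vx: "walk V E 1 v x"
    using walk.walkS[where E = E, OF \<open>E v x\<close> walk.walk0[where E = E, OF \<open>x \<in> V\<close>]] by simp
  consider "y = x" | z where "z \<in> V" "E x z" "c z < c x" "y \<in> descendants V E c z"
    using descendants_first_step[OF y] by blast
  then show "y \<in> ball V E v r"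
  proof cases
    case 1
    have "1 \<le> c v" using pos \<open>v \<in> V\<close> by blast
    then show ?thesis using 1 walk_imp_mem_ball[OF vx] assms(5,6) by simp
  next
    case 2
    obtain n where zy: "walk V E n z y" and n: "n + c y \<le> c z"
      using descendants_walk[OF 2(4,1)] by blast
    show ?thesis
    proof (cases "z = v")
      case True
      then show ?thesis using walk_imp_mem_ball[OF zy] n \<open>1 \<le> c y\<close> assms(5,6) by simp
    next
      case False
      have "walk V E (Suc (Suc n)) v y"
        using walk.walkS[where E = E, OF \<open>E v x\<close> walk.walkS[where E = E, OF 2(2) zy]] .
      moreover have "Suc (Suc n) \<le> r"
        using n \<open>1 \<le> c y\<close> 2(2,3) False unique assms(5,6) by (cases "c z < c v") auto
      ultimately show ?thesis by (rule walk_imp_mem_ball)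
    qed
  qed
qed

lemma descendants_swap_cases:
  assumes c: "grundy_on V E c" and "v \<in> V" "c v + 1 = c u"
    and "y \<in> descendants V E (c(u := c v, v := c u)) v"
  shows "y = u \<or> y = v \<or> c y < c v"
  using assms(4)
proof (induction rule: descendants.induct)
  case (step y z)
  have "u \<noteq> v" using \<open>c v + 1 = c u\<close> by auto
  let ?c' = "c(u := c v, v := c u)"
  show ?case
  proof (cases "z = u \<or> z = v")
    case False
    then have "c z < ?c' y" using step.hyps(4) by simp
    from step.IH show ?thesis
    proof (elim disjE)
      assume "y = v"
      moreover have "c v \<noteq> c z"
        using c \<open>v \<in> V\<close> step.hyps(2,3) calculation unfolding grundy_on_def by blast
      ultimately show ?thesis using \<open>c z < ?c' y\<close> assms(3) by simp
    qed (use \<open>c z < ?c' y\<close> \<open>u \<noteq> v\<close> in \<open>simp_all split: if_splits\<close>)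
  qed blast
qed simp

lemma swap_colors_proper:
  assumes G: "graph V E" and c: "grundy_on V E c" and uv: "c v + 1 = c u"
    and W: "W \<subseteq> V" "\<forall>w\<in>W. w = u \<or> w = v \<or> c w < c v"
    and "y \<in> W" "z \<in> W" "E y z"
  shows "(c(u := c v, v := c u)) y \<noteq> (c(u := c v, v := c u)) z"
proof -
  have "y \<noteq> z" using G \<open>E y z\<close> by (simp add: graph_def)
  have "u \<noteq> v" using uv by auto
  consider "y \<in> {u, v}" "z \<in> {u, v}" | "y \<in> {u, v}" "z \<notin> {u, v}" | "y \<notin> {u, v}" "z \<in> {u, v}"
    | "y \<notin> {u, v}" "z \<notin> {u, v}"
    by blast
  then show ?thesis
  proof cases
    case 4
    have "c y \<noteq> c z" using c W(1) \<open>y \<in> W\<close> \<open>z \<in> W\<close> \<open>E y z\<close> unfolding grundy_on_def by blast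
    then show ?thesis using 4 by simp
  qed (use \<open>y \<noteq> z\<close> \<open>u \<noteq> v\<close> uv W(2) \<open>y \<in> W\<close> \<open>z \<in> W\<close> in auto)
qed

lemma grundy_on_descendants_swap:
  assumes G: "graph V E" and c: "grundy_on V E c" and "E u v" and uv: "c v + 1 = c u"
  shows "grundy_on (descendants V E (c(u := c v, v := c u)) v) E (c(u := c v, v := c u))"
proof -
  define c' where "c' = c(u := c v, v := c u)"
  have "u \<in> V" "v \<in> V" "E v u" using G \<open>E u v\<close> by (auto simp: graph_def)
  have c'_other: "c' y = c y" if "y \<noteq> u" "y \<noteq> v" for y using that by (simp add: c'_def)
  have c'_u: "c' u = c v" and c'_v: "c' v = c u" using uv by (auto simp: c'_def)
  let ?D = "descendants V E c' v"
  have cases: "\<forall>y\<in>?D. y = u \<or> y = v \<or> c y < c v"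
    using descendants_swap_cases[OF c \<open>v \<in> V\<close> uv] unfolding c'_def by blast
  have D: "?D \<subseteq> V" using descendants_subset[OF \<open>v \<in> V\<close>] .
  note c_def = c[unfolded grundy_on_def]
  have "grundy_on ?D E c'"
  proof (rule grundy_on_descendantsI[OF \<open>v \<in> V\<close>])
    show "1 \<le> c' y" if "y \<in> ?D" for y
      using c_def D that \<open>u \<in> V\<close> \<open>v \<in> V\<close> c'_other c'_u c'_v by (cases "y = u \<or> y = v") auto
    show "c' y \<noteq> c' z" if "y \<in> ?D" "z \<in> ?D" "E y z" for y z
      using swap_colors_proper[OF G c uv D cases that] unfolding c'_def .
  next
    fix y i assume "y \<in> ?D" "1 \<le> i" "i < c' y"
    show "\<exists>z\<in>V. E y z \<and> c' z = i"
    proof (cases "y = v \<and> i = c v")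
      case True
      then show ?thesis using \<open>u \<in> V\<close> \<open>E v u\<close> c'_u by blast
    next
      case False
      have "i < c y \<and> i < c v"
        using cases \<open>y \<in> ?D\<close>
      proof (elim ballE disjE)
        assume "c y < c v"
        moreover have "y \<noteq> u" "y \<noteq> v" using calculation uv by auto
        ultimately show ?thesis using \<open>i < c' y\<close> c'_other by simp
      qed (use False \<open>i < c' y\<close> c'_u c'_v uv in auto)
      then obtain z where "z \<in> V" "E y z" "c z = i"
        using c_def D \<open>y \<in> ?D\<close> \<open>1 \<le> i\<close> by blast
      moreover have "z \<noteq> u" "z \<noteq> v" using \<open>c z = i\<close> \<open>i < c y \<and> i < c v\<close> uv by auto
      ultimately show ?thesis using c'_other by auto
    qed
  qed
  then show ?thesis unfolding c'_def .
qed

lemma le_grundy_vertex_loc: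
  assumes G: "graph V E" and "x \<in> V" and c: "grundy_on (descendants V E c x) E c"
    and "c x - 1 \<le> Delta V E x"
  shows "c x \<le> grundy_vertex (locV V E x) (locE V E x) x"
proof -
  let ?D = "descendants V E c x"
  have "?D \<subseteq> ball V E x (c x - 1)"
    using descendants_subset_ball[OF \<open>x \<in> V\<close>] c by (simp add: grundy_on_def)
  also have "\<dots> \<subseteq> locV V E x" unfolding locV_def using ball_mono assms(4) .
  finally have D: "?D \<subseteq> locV V E x" .
  then have "grundy_on ?D (locE V E x) c" using c by (simp add: locE_def grundy_on_induced_iff)
  with grundy_on_extend[OF graph_loc[OF G] D]
  obtain c' where c': "grundy_on (locV V E x) (locE V E x) c'" "\<forall>y\<in>?D. c' y = c y"
    by metis
  have "finite (locV V E x)" using graph_loc[OF G] by (simp add: graph_def)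
  from grundy_on_le_grundy_vertex[OF this c'(1) mem_locV[OF \<open>x \<in> V\<close>]]
  show ?thesis using c'(2) descendants.self by metis
qed

lemma ex_le_grundy_vertex_loc:
  assumes G: "graph V E" and c: "grundy_on V E c" and "u \<in> V"
  shows "\<exists>v\<in>V. c u \<le> grundy_vertex (locV V E v) (locE V E v) v"
proof (cases "c u - 1 \<le> Delta V E u")
  case True
  then show ?thesis
    using le_grundy_vertex_loc[OF G \<open>u \<in> V\<close> grundy_on_descendants[OF c \<open>u \<in> V\<close>]] \<open>u \<in> V\<close>
    by blast
next
  case False
  then have "1 \<le> c u - 1 \<and> c u - 1 < c u" by linarith
  then obtain v where "v \<in> V" "E u v" and uv: "c v + 1 = c u"
    using c \<open>u \<in> V\<close> unfolding grundy_on_def by fastforce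
  let ?c' = "c(u := c v, v := c u)"
  have "finite V" using G by (simp add: graph_def)
  have "c u - 1 \<le> deg V E u" using pred_color_le_deg[OF \<open>finite V\<close> c \<open>u \<in> V\<close>] .
  also have "\<dots> \<le> Delta V E v" using deg_le_Delta_of_next_color[OF G c \<open>E u v\<close> uv] False by simp
  finally have "?c' v - 1 \<le> Delta V E v" by simp
  from le_grundy_vertex_loc[OF G \<open>v \<in> V\<close> grundy_on_descendants_swap[OF G c \<open>E u v\<close> uv] this]
  show ?thesis using \<open>v \<in> V\<close> by auto
qed

lemma minimal_grundy_subgraph_eq_descendants:
  assumes sub: "subgraph VH EH V E" and "u \<in> VH" and cH: "grundy_coloring VH EH c k" and "c u = k"
    and min: "\<forall>VH' EH'. subgraph VH' EH' V E \<and> u \<in> VH' \<and> grundy_coloring VH' EH' c k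
                \<longrightarrow> card VH \<le> card VH'"
  shows "VH = descendants VH EH c u"
proof -
  let ?D = "descendants VH EH c u"
  have GH: "graph VH EH" using sub by (simp add: subgraph_def)
  have "finite VH" using GH by (simp add: graph_def)
  have "?D \<subseteq> VH" using descendants_subset[OF \<open>u \<in> VH\<close>] .
  have "grundy_on ?D EH c"
    using grundy_on_descendants[OF grundy_coloring_imp_grundy_on[OF cH] \<open>u \<in> VH\<close>] .
  moreover have "\<forall>y\<in>?D. c y \<le> c u"
    using \<open>?D \<subseteq> VH\<close> grundy_coloring_range[OF cH] \<open>c u = k\<close> by auto
  ultimately have "grundy_coloring ?D EH c (c u)"
    using grundy_coloring_if_grundy_on_max descendants.self by fast
  then have "grundy_coloring ?D (induced EH ?D) c k"
    using \<open>c u = k\<close> by (simp add: grundy_coloring_induced_iff)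
  moreover have "subgraph ?D (induced EH ?D) V E"
    unfolding subgraph_def
  proof (intro conjI allI impI)
    show "graph ?D (induced EH ?D)" using graph_induced[OF GH \<open>?D \<subseteq> VH\<close>] .
    show "?D \<subseteq> V" using \<open>?D \<subseteq> VH\<close> sub by (auto simp: subgraph_def)
    show "E x y" if "induced EH ?D x y" for x y
      using that sub by (simp add: subgraph_def induced_def)
  qed
  moreover have "u \<in> ?D" by (rule descendants.self)
  ultimately have "card VH \<le> card ?D" using min by blast
  then show ?thesis using card_seteq[OF \<open>finite VH\<close> \<open>?D \<subseteq> VH\<close>] by simp
qed

lemma descendants_subgraph_subset_loc_ball:
  assumes G: "graph V E" and c: "grundy_on V E c" and sub: "subgraph VH EH V E"
    and "u \<in> VH" and cH: "grundy_on VH EH c"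
  shows "descendants VH EH c u \<subseteq> ball V E u (Delta V E u) \<or>
    (\<exists>w. E u w \<and> descendants VH EH c u \<subseteq> ball V E w (Delta V E w))"
proof -
  let ?D = "descendants VH EH c u"
  have "finite V" "u \<in> V" using G sub \<open>u \<in> VH\<close> by (auto simp: graph_def subgraph_def)
  have GH: "graph VH EH" and EH: "\<forall>x y. EH x y \<longrightarrow> E x y" using sub by (simp_all add: subgraph_def)
  have pos: "\<forall>y\<in>VH. 1 \<le> c y" using cH by (simp add: grundy_on_def)
  show ?thesis
  proof (cases "c u - 1 \<le> Delta V E u")
    case True
    have "?D \<subseteq> ball VH EH u (c u - 1)"
      using descendants_subset_ball[OF \<open>u \<in> VH\<close>] pos descendants_subset[OF \<open>u \<in> VH\<close>] by blast
    also have "\<dots> \<subseteq> ball V E u (c u - 1)" by (rule ball_subgraph[OF sub])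
    also have "\<dots> \<subseteq> ball V E u (Delta V E u)" by (rule ball_mono[OF True])
    finally show ?thesis by (rule disjI1)
  next
    case False
    then have "1 \<le> c u - 1 \<and> c u - 1 < c u" by linarith
    then obtain v where "v \<in> VH" "EH u v" "c v = c u - 1"
      using cH \<open>u \<in> VH\<close> unfolding grundy_on_def by blast
    then have uv: "c v + 1 = c u" using False by simp
    have "E u v" using EH \<open>EH u v\<close> by blast
    have Delta_v: "deg V E u \<le> Delta V E v"
      using deg_le_Delta_of_next_color[OF G c \<open>E u v\<close> uv] False by simp
    have deg_u: "c u - 1 \<le> deg V E u" using pred_color_le_deg[OF \<open>finite V\<close> c \<open>u \<in> V\<close>] .
    \<comment> \<open>a walk from v through u and another neighbour of colour c v may have length c u;
      this needs c u \<le> Delta v, which holds unless deg u = c u - 1, and then the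
      neighbours of u have distinct colours\<close>
    have "c u \<le> Delta V E v \<or> (\<forall>z. EH u z \<and> c z = c v \<longrightarrow> z = v)"
    proof (cases "c u \<le> deg V E u")
      case False
      then have inj: "inj_on c {w \<in> V. E u w}"
        using inj_on_neighbour_colors[OF \<open>finite V\<close> c \<open>u \<in> V\<close>] by simp
      have "z = v" if "EH u z" "c z = c v" for z
      proof (rule inj_onD[OF inj \<open>c z = c v\<close>])
        show "z \<in> {w \<in> V. E u w}" using \<open>EH u z\<close> EH G by (auto simp: graph_def)
        show "v \<in> {w \<in> V. E u w}" using G \<open>E u v\<close> by (simp add: graph_def)
      qed
      then show ?thesis by blast
    qed (use Delta_v in simp)
    then have "?D \<subseteq> ball VH EH v (Delta V E v)"
      using descendants_subset_ball_neighbour[OF \<open>u \<in> VH\<close> \<open>v \<in> VH\<close> _ pos uv]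
        graph_sym[OF GH \<open>EH u v\<close>] Delta_v deg_u by simp
    also have "\<dots> \<subseteq> ball V E v (Delta V E v)" by (rule ball_subgraph[OF sub])
    finally show ?thesis using \<open>E u v\<close> by blast
  qed
qed

lemma minimal_grundy_subgraph_subset_balls:
  assumes G: "graph V E" and c: "grundy_coloring V E c k" and "u \<in> V" "c u = k"
    and sub: "subgraph VH EH V E" and "u \<in> VH" and cH: "grundy_coloring VH EH c k"
    and min: "\<forall>VH' EH'. subgraph VH' EH' V E \<and> u \<in> VH' \<and> grundy_coloring VH' EH' c k
                \<longrightarrow> card VH \<le> card VH'"
  shows "VH \<subseteq> ball V E u (k - 1) \<and> ball V E u (k - 1) \<subseteq> ball V E u (deg V E u) \<and>
    (VH \<subseteq> ball V E u (Delta V E u) \<or> (\<exists>w. E u w \<and> VH \<subseteq> ball V E w (Delta V E w)))"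
proof -
  have VH: "descendants VH EH c u = VH"
    using minimal_grundy_subgraph_eq_descendants[OF sub \<open>u \<in> VH\<close> cH \<open>c u = k\<close> min] by simp
  note cV = grundy_coloring_imp_grundy_on[OF c] and cH' = grundy_coloring_imp_grundy_on[OF cH]
  have "descendants VH EH c u \<subseteq> ball VH EH u (k - 1)"
    using descendants_subset_ball[OF \<open>u \<in> VH\<close>, of EH c] cH' \<open>c u = k\<close>
    unfolding VH by (simp add: grundy_on_def)
  also have "\<dots> \<subseteq> ball V E u (k - 1)" by (rule ball_subgraph[OF sub])
  finally have "VH \<subseteq> ball V E u (k - 1)" unfolding VH .
  moreover have "k - 1 \<le> deg V E u"
    using G pred_color_le_deg[OF _ cV \<open>u \<in> V\<close>] \<open>c u = k\<close> by (simp add: graph_def)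
  then have "ball V E u (k - 1) \<subseteq> ball V E u (deg V E u)" by (rule ball_mono)
  moreover note descendants_subgraph_subset_loc_ball[OF G cV sub \<open>u \<in> VH\<close> cH']
  ultimately show ?thesis unfolding VH by (intro conjI)
qed

lemma grundy_number_eq_Max_loc:
  assumes G: "graph V E" and "V \<noteq> {}"
  shows "grundy_number V E = Max {grundy_number (locV V E v) (locE V E v) | v. v \<in> V} \<and>
    grundy_number V E = Max {grundy_vertex (locV V E v) (locE V E v) v | v. v \<in> V}"
proof -
  let ?g = "grundy_number V E"
  let ?num = "\<lambda>v. grundy_number (locV V E v) (locE V E v)"
  let ?vtx = "\<lambda>v. grundy_vertex (locV V E v) (locE V E v) v"
  have "finite V" using G by (simp add: graph_def)
  have num_le: "?num v \<le> ?g" for v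
    using grundy_number_induced_le[OF G locV_subset] by (simp add: locE_def)
  have vtx_le: "?vtx v \<le> ?num v" if "v \<in> V" for v
    using grundy_vertex_le_grundy_number[OF graph_loc[OF G] mem_locV[OF that]] .
  obtain c where c: "grundy_coloring V E c ?g" using grundy_number_attained[OF G] by blast
  obtain x where "x \<in> V" using \<open>V \<noteq> {}\<close> by blast
  then have "1 \<le> ?g" using grundy_coloring_range[OF c] by fastforce
  moreover have "c ` V = {1..?g}" using c unfolding grundy_coloring_def by blast
  ultimately obtain u where "u \<in> V" "c u = ?g" by (metis atLeastAtMost_iff imageE order_refl)
  then obtain v0 where "v0 \<in> V" "?g \<le> ?vtx v0"
    using ex_le_grundy_vertex_loc[OF G grundy_coloring_imp_grundy_on[OF c]] by metis
  then have v0: "?vtx v0 = ?g" "?num v0 = ?g"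
    using vtx_le[OF \<open>v0 \<in> V\<close>] num_le[of v0] by simp_all
  have "Max {?num v | v. v \<in> V} = ?g"
  proof (rule Max_eqI)
    show "finite {?num v | v. v \<in> V}" using \<open>finite V\<close> by simp
    show "y \<le> ?g" if "y \<in> {?num v | v. v \<in> V}" for y using that num_le by blast
    show "?g \<in> {?num v | v. v \<in> V}" using v0(2) \<open>v0 \<in> V\<close> by force
  qed
  moreover have "Max {?vtx v | v. v \<in> V} = ?g"
  proof (rule Max_eqI)
    show "finite {?vtx v | v. v \<in> V}" using \<open>finite V\<close> by simp
    show "y \<le> ?g" if "y \<in> {?vtx v | v. v \<in> V}" for y
      using that vtx_le num_le order_trans by blast
    show "?g \<in> {?vtx v | v. v \<in> V}" using v0(1) \<open>v0 \<in> V\<close> by force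
  qed
  ultimately show ?thesis by simp
qed

theorem proposition8:
  shows
  "(\<forall>(V::'a set) E c k u VH EH.
      graph V E \<and> grundy_coloring V E c k \<and> u \<in> V \<and> c u = k \<and>
      subgraph VH EH V E \<and> u \<in> VH \<and> grundy_coloring VH EH c k \<and>
      (\<forall>VH' EH'. subgraph VH' EH' V E \<and> u \<in> VH' \<and> grundy_coloring VH' EH' c k
                  \<longrightarrow> card VH \<le> card VH')
      \<longrightarrow> VH \<subseteq> ball V E u (k - 1) \<and>
          ball V E u (k - 1) \<subseteq> ball V E u (deg V E u) \<and>
          (VH \<subseteq> ball V E u (Delta V E u) \<or>
           (\<exists>w. E u w \<and> VH \<subseteq> ball V E w (Delta V E w))))
   \<and>
   (\<forall>(V::'a set) E. graph V E \<and> V \<noteq> {} \<longrightarrow>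
      grundy_number V E = Max {grundy_number (locV V E v) (locE V E v) | v. v \<in> V} \<and>
      grundy_number V E = Max {grundy_vertex (locV V E v) (locE V E v) v | v. v \<in> V})"
  by (rule conjI; intro allI impI; elim conjE)
    (rule minimal_grundy_subgraph_subset_balls grundy_number_eq_Max_loc; assumption)+

end
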